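(* Let $f$ be a nonconstant harmonic function on $K$. Then the derivative of the restriction of $f$ to $[p_1,p_2]$ exists and is infinite ($+\infty$ or $-\infty$) at all junction points of $[p_1,p_2]$ with at most one exception (one-sided derivatives at the endpoints $p_1,p_2$). Moreover, on the whole contour $[p_0,p_1]\cup[p_0,p_2]\cup[p_1,p_2]$ of $G_0$ there is at most one junction point $x$ for which it fails that, for every edge $E$ of $G_0$ containing $x$, the derivative of $f|_E$ at $x$ (one-sided if $x$ is an endpoint of $E$) exists and is infinite; in particular the derivative of a restriction can vanish at no more than one junction point of the contour.
   Context: Let $p_0,p_1,p_2$ be the vertices of a unit equilateral triangle in $\mathbb{R}^2$, $F_i(x)=(x+p_i)/2$, and $K$ the Sierpinski gasket (the attractor of $F_0,F_1,F_2$). For words $w$ of length $m$, $F_w$ is the composition $F_{w_1}\circ\cdots\circ F_{w_m}$; the minimal triangles of the graph $G_m$ are the triangles with vertices $F_w(p_0),F_w(p_1),F_w(p_2)$, and $V_m$ is the set of all these vertices. Junction points are the points of $\bigcup_m V_m$; on an edge $[p_i,p_j]$ parametrized by $t\mapsto p_i+t(p_j-p_i)$, $t\in[0,1]$, these are exactly the points with dyadic rational $t$. A continuous $f:K\to\mathbb{R}$ is harmonic if for every $m\ge0$ and every minimal triangle of $G_m$ with vertices $v_i,v_j,v_k$, the value at the midpoint $v_{ij}$ of $[v_i,v_j]$ is $\frac15(2f(v_i)+2f(v_j)+f(v_k))$. Restrictions to edges are viewed as functions of the linear parameter $t\in[0,1]$. *)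

theory Defs
  imports "HOL-Analysis.Analysis"
begin

text \<open>Points of the plane are complex numbers. The vertices of the triangle are
  p 0, p 1, p 2 (a function on nat, only indices below 3 matter).\<close>

definition unit_equilateral :: "(nat \<Rightarrow> complex) \<Rightarrow> bool" where
  "unit_equilateral p \<longleftrightarrow> (\<forall>i<3. \<forall>j<3. i \<noteq> j \<longrightarrow> dist (p i) (p j) = 1)"

definition SG_map :: "(nat \<Rightarrow> complex) \<Rightarrow> nat \<Rightarrow> complex \<Rightarrow> complex" where
  "SG_map p i x = (x + p i) / 2"

definition SG_word :: "(nat \<Rightarrow> complex) \<Rightarrow> nat list \<Rightarrow> complex \<Rightarrow> complex" where
  "SG_word p w = foldr (\<lambda>i g. SG_map p i \<circ> g) w id"

definition SG_words :: "nat \<Rightarrow> nat list set" where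
  "SG_words m = {w. length w = m \<and> set w \<subseteq> {0,1,2}}"

definition SG :: "(nat \<Rightarrow> complex) \<Rightarrow> complex set" where
  "SG p = (THE K. compact K \<and> K \<noteq> {} \<and> K = (\<Union>i\<in>{0,1,2}. SG_map p i ` K))"

definition SG_V :: "(nat \<Rightarrow> complex) \<Rightarrow> nat \<Rightarrow> complex set" where
  "SG_V p m = {SG_word p w (p j) | w j. w \<in> SG_words m \<and> j < 3}"

definition SG_harmonic :: "(nat \<Rightarrow> complex) \<Rightarrow> (complex \<Rightarrow> real) \<Rightarrow> bool" where
  "SG_harmonic p f \<longleftrightarrow> continuous_on (SG p) f \<and>
     (\<forall>m. \<forall>w\<in>SG_words m. \<forall>i j k. {i, j, k} = {0,1,2::nat} \<longrightarrow>
        f ((SG_word p w (p i) + SG_word p w (p j)) / 2)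
          = (2 * f (SG_word p w (p i)) + 2 * f (SG_word p w (p j)) + f (SG_word p w (p k))) / 5)"

definition dyadic :: "real \<Rightarrow> bool" where
  "dyadic t \<longleftrightarrow> (\<exists>k::int. \<exists>n::nat. t = of_int k / 2 ^ n)"

definition edge_restr :: "(nat \<Rightarrow> complex) \<Rightarrow> (complex \<Rightarrow> real) \<Rightarrow> nat \<Rightarrow> nat \<Rightarrow> real \<Rightarrow> real" where
  "edge_restr p f i j t = f (p i + of_real t * (p j - p i))"

text \<open>The derivative of g on [0,1] at t exists and equals +infinity or -infinity
  (one-sided at the endpoints, since the limit is taken within [0,1]).\<close>
definition infinite_deriv :: "(real \<Rightarrow> real) \<Rightarrow> real \<Rightarrow> bool" where
  "infinite_deriv g t \<longleftrightarrow>
     filterlim (\<lambda>s. (g s - g t) / (s - t)) at_top (at t within {0..1}) \<or>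
     filterlim (\<lambda>s. (g s - g t) / (s - t)) at_bot (at t within {0..1})"

definition contour_junctions :: "(nat \<Rightarrow> complex) \<Rightarrow> complex set" where
  "contour_junctions p = {p i + of_real t * (p j - p i) | i j t.
      i < j \<and> j < 3 \<and> t \<in> {0..1} \<and> dyadic t}"

definition good_point :: "(nat \<Rightarrow> complex) \<Rightarrow> (complex \<Rightarrow> real) \<Rightarrow> complex \<Rightarrow> bool" where
  "good_point p f x \<longleftrightarrow> (\<forall>i j t. i < j \<and> j < 3 \<and> t \<in> {0..1} \<and> x = p i + of_real t * (p j - p i)
       \<longrightarrow> infinite_deriv (edge_restr p f i j) t)"

end

theory Submission
  imports Defs
begin

text \<open>
  Record the values of a harmonic function at the two ends and the apex of a cell of an edge
  as a triple \<open>(x, y, z)\<close>. Halving the cell transforms the triple by the 2-2-1/5 rule, which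
  multiplies the slope \<open>y + z - 2x\<close> at the left end by \<open>3/5\<close> and the skew \<open>z - y\<close> by \<open>1/5\<close>.
  With the minimum principle on subcells, a nonzero slope makes the difference quotient at the
  left end grow like \<open>(6/5)^n\<close> on \<open>[2^-(n+1), 2^-n]\<close>, so the one-sided derivative is infinite
  with the sign of the slope. The derivative can therefore fail to be infinite only at a
  junction point where the slope of an adjacent cell vanishes. Such a point forces the slopes at
  the two ends of its edge to have a nonnegative product, and two of them cannot lie in different
  halves of a cell, so each edge carries at most one. The slopes at the vertices are the negated
  normal derivatives, which sum to zero; two such points on different edges make the normal
  derivative at the common vertex vanish, and then both points are that vertex.
\<close>

section \<open>The gasket and its junction points\<close>

abbreviation edge_point :: "(nat \<Rightarrow> complex) \<Rightarrow> nat \<Rightarrow> nat \<Rightarrow> real \<Rightarrow> complex" where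
  "edge_point p i j t \<equiv> p i + of_real t * (p j - p i)"

lemma ex_divide_pow2_less: "0 < e \<Longrightarrow> \<exists>n. C / 2^n < (e::real)"
  using order_tendstoD(2)[OF LIMSEQ_divide_realpow_zero[of 2 C]]
  by (auto simp: eventually_sequentially)

lemma less_3_iff: "(l::nat) < 3 \<longleftrightarrow> l \<in> {0,1,2}"
  by auto

lemma SG_word_Nil [simp]: "SG_word p [] = id"
  by (simp add: SG_word_def)

lemma SG_word_Cons: "SG_word p (l # w) = SG_map p l \<circ> SG_word p w"
  by (simp add: SG_word_def)

lemma SG_word_snoc: "SG_word p (w @ [l]) = SG_word p w \<circ> SG_map p l"
  by (induction w) (simp_all add: SG_word_Cons comp_assoc)

lemma SG_word_affine: "SG_word p w z = z / 2 ^ length w + SG_word p w 0"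
proof (induction w arbitrary: z)
  case (Cons l w)
  have "SG_word p (l # w) z = (z / 2 ^ length w + SG_word p w 0 + p l) / 2"
    by (simp add: SG_word_Cons SG_map_def Cons.IH[of z])
  also have "\<dots> = z / 2 ^ length (l # w) + SG_word p (l # w) 0"
    by (simp add: SG_word_Cons SG_map_def field_simps)
  finally show ?case .
qed simp

lemma SG_map_funpow: "(SG_map p l ^^ n) x = p l + (x - p l) / 2^n"
proof (induction n)
  case (Suc n)
  then have "(SG_map p l ^^ Suc n) x = SG_map p l (p l + (x - p l) / 2^n)" by simp
  also have "\<dots> = p l + (x - p l) / 2^Suc n" by (simp add: SG_map_def field_simps)
  finally show ?case .
qed simp

lemma SG_map_edge_left: "SG_map p i (edge_point p i j u) = edge_point p i j (u / 2)"
  by (simp add: SG_map_def field_simps)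

lemma SG_map_edge_right:
  "SG_map p j (edge_point p i j u) = edge_point p i j ((1 + u) / 2)"
  by (simp add: SG_map_def field_simps)

definition SG_junctions :: "(nat \<Rightarrow> complex) \<Rightarrow> complex set" where
  "SG_junctions p = (\<Union>m. SG_V p m)"

lemma SG_junctions_iff:
  "x \<in> SG_junctions p \<longleftrightarrow> (\<exists>w j. set w \<subseteq> {0,1,2} \<and> j < 3 \<and> x = SG_word p w (p j))"
  by (auto simp: SG_junctions_def SG_V_def SG_words_def)

lemma vertex_in_SG_junctions: "j < 3 \<Longrightarrow> p j \<in> SG_junctions p"
  unfolding SG_junctions_iff by (rule exI[of _ "[]"]) auto

lemma SG_map_in_SG_junctions:
  assumes "x \<in> SG_junctions p" "l < 3"
  shows "SG_map p l x \<in> SG_junctions p"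
proof -
  obtain w j where w: "set w \<subseteq> {0,1,2}" "j < 3" "x = SG_word p w (p j)"
    using assms(1) by (auto simp: SG_junctions_iff)
  have "set (l # w) \<subseteq> {0,1,2}" using w(1) assms(2) by (auto simp: less_3_iff)
  moreover have "SG_map p l x = SG_word p (l # w) (p j)" using w(3) by (simp add: SG_word_Cons)
  ultimately show ?thesis using w(2) unfolding SG_junctions_iff by blast
qed

lemma SG_junctions_cases:
  assumes "x \<in> SG_junctions p"
  obtains l y where "l < 3" "y \<in> SG_junctions p" "x = SG_map p l y"
proof -
  obtain w j where w: "set w \<subseteq> {0,1,2}" "j < 3" "x = SG_word p w (p j)"
    using assms by (auto simp: SG_junctions_iff)
  show thesis
  proof (cases w)
    case Nil
    then show thesis using w vertex_in_SG_junctions[of j p] by (intro that[of j "p j"]) (auto simp: SG_map_def)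
  next
    case (Cons l w')
    then have "SG_word p w' (p j) \<in> SG_junctions p" using w unfolding SG_junctions_iff by auto
    then show thesis using w Cons by (intro that[of l]) (auto simp: SG_word_Cons less_3_iff)
  qed
qed

lemma bounded_SG_junctions: "bounded (SG_junctions p)"
proof -
  define M where "M = norm (p 0) + norm (p 1) + norm (p 2)"
  have vertex: "norm (p l) \<le> M" if "l \<in> {0,1,2}" for l
    using that by (auto simp: M_def)
  have "norm (SG_word p w (p j)) \<le> M" if "set w \<subseteq> {0,1,2}" "j < 3" for w j
    using that
  proof (induction w)
    case (Cons l w)
    then have "norm (SG_word p w (p j) + p l) \<le> 2 * M"
      using vertex[of l] norm_triangle_ineq[of "SG_word p w (p j)" "p l"] by simp
    then show ?case by (simp add: SG_word_Cons SG_map_def norm_divide)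
  qed (use vertex in \<open>auto simp: less_3_iff\<close>)
  then have "\<forall>x\<in>SG_junctions p. norm x \<le> M" by (auto simp: SG_junctions_iff)
  then show ?thesis by (auto simp: bounded_iff)
qed

lemma continuous_on_SG_map: "continuous_on S (SG_map p l)"
  unfolding SG_map_def by (intro continuous_intros) auto

lemma closure_SG_junctions_invariant:
  "closure (SG_junctions p) = (\<Union>l\<in>{0,1,2}. SG_map p l ` closure (SG_junctions p))"
proof
  have "SG_map p l ` closure (SG_junctions p) \<subseteq> closure (SG_junctions p)" if "l < 3" for l
    by (rule image_closure_subset[OF continuous_on_SG_map closed_closure])
      (use that in \<open>auto intro: SG_map_in_SG_junctions closure_subset[THEN subsetD]\<close>)
  then show "(\<Union>l\<in>{0,1,2}. SG_map p l ` closure (SG_junctions p)) \<subseteq> closure (SG_junctions p)"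
    by auto
  have "compact (SG_map p l ` closure (SG_junctions p))" for l
    using bounded_SG_junctions by (intro compact_continuous_image continuous_on_SG_map) auto
  then have "closed (\<Union>l\<in>{0,1,2}. SG_map p l ` closure (SG_junctions p))"
    by (intro closed_Union compact_imp_closed) auto
  moreover have "SG_junctions p \<subseteq> (\<Union>l\<in>{0,1,2}. SG_map p l ` closure (SG_junctions p))"
  proof
    fix x assume "x \<in> SG_junctions p"
    then obtain l y where l: "l < 3" "y \<in> SG_junctions p" "x = SG_map p l y"
      by (rule SG_junctions_cases)
    then have "l \<in> {0,1,2}" "y \<in> closure (SG_junctions p)"
      using closure_subset less_3_iff by blast+
    then show "x \<in> (\<Union>l\<in>{0,1,2}. SG_map p l ` closure (SG_junctions p))"
      using l(3) by blast
  qed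
  ultimately show "closure (SG_junctions p) \<subseteq> (\<Union>l\<in>{0,1,2}. SG_map p l ` closure (SG_junctions p))"
    by (rule closure_minimal[rotated])
qed

lemma invariant_SG_word_preimage:
  assumes "x \<in> K" "K \<subseteq> (\<Union>l\<in>{0,1,2}. SG_map p l ` K)"
  shows "\<exists>w y. length w = n \<and> set w \<subseteq> {0,1,2} \<and> y \<in> K \<and> x = SG_word p w y"
proof (induction n)
  case (Suc n)
  then obtain w y where w: "length w = n" "set w \<subseteq> {0,1,2}" "y \<in> K" "x = SG_word p w y" by blast
  from subsetD[OF assms(2) w(3)] obtain l z where l: "l \<in> {0,1,2}" "z \<in> K" "y = SG_map p l z"
    by blast
  have "x = SG_word p (w @ [l]) z" using w(4) l(3) by (simp add: SG_word_snoc)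
  then show ?case using w l by (intro exI[of _ "w @ [l]"] exI[of _ z]) simp
qed (use assms(1) in \<open>intro exI[of _ "[]"] exI[of _ x], simp\<close>)

lemma SG_junctions_subset_invariant:
  assumes "closed K" "x0 \<in> K" "\<And>x l. x \<in> K \<Longrightarrow> l < 3 \<Longrightarrow> SG_map p l x \<in> K"
  shows "SG_junctions p \<subseteq> K"
proof -
  have vertex: "p l \<in> K" if "l < 3" for l
  proof (rule closed_sequentially[OF assms(1)])
    show "(SG_map p l ^^ n) x0 \<in> K" for n by (induction n) (simp_all add: assms(2,3) that)
    have "(\<lambda>n. (1/2::complex)^n) \<longlonglongrightarrow> 0" by (rule LIMSEQ_power_zero) simp
    then have "(\<lambda>n. (x0 - p l) * (1/2)^n) \<longlonglongrightarrow> 0" by (rule tendsto_mult_right_zero)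
    from tendsto_add[OF tendsto_const[of "p l"] this]
    have "(\<lambda>n. p l + (x0 - p l) * (1/2)^n) \<longlonglongrightarrow> p l" by simp
    then show "(\<lambda>n. (SG_map p l ^^ n) x0) \<longlonglongrightarrow> p l"
      by (simp add: SG_map_funpow power_one_over)
  qed
  have "SG_word p w (p j) \<in> K" if "set w \<subseteq> {0,1,2}" "j < 3" for w j
    using that by (induction w) (auto simp: SG_word_Cons vertex less_3_iff intro!: assms(3))
  then show ?thesis by (auto simp: SG_junctions_iff)
qed

lemma invariant_subset_closure_SG_junctions:
  assumes "bounded K" "K \<subseteq> (\<Union>l\<in>{0,1,2}. SG_map p l ` K)"
  shows "K \<subseteq> closure (SG_junctions p)"
proof
  obtain D where "K \<subseteq> ball (p 0) D" using bounded_subset_ballD[OF assms(1)] by blast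
  then have D: "norm (y - p 0) \<le> D" if "y \<in> K" for y
    using that by (auto simp: dist_norm norm_minus_commute less_imp_le)
  fix x assume "x \<in> K"
  show "x \<in> closure (SG_junctions p)"
    unfolding closure_approachable
  proof (intro allI impI)
    fix e :: real assume "0 < e"
    then obtain n where n: "D / 2^n < e" using ex_divide_pow2_less by blast
    obtain w y where w: "length w = n" "set w \<subseteq> {0,1,2}" "y \<in> K" "x = SG_word p w y"
      using invariant_SG_word_preimage[OF \<open>x \<in> K\<close> assms(2)] by blast
    have "dist (SG_word p w (p 0)) x = norm (y - p 0) / 2^n"
      using w SG_word_affine[of p w y] SG_word_affine[of p w "p 0"]
      by (simp add: dist_norm norm_divide norm_power norm_minus_commute diff_divide_distrib[symmetric])
    also have "\<dots> \<le> D / 2^n" using D[OF w(3)] by (simp add: divide_right_mono)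
    also have "\<dots> < e" by (rule n)
    finally have "dist (SG_word p w (p 0)) x < e" .
    moreover have "SG_word p w (p 0) \<in> SG_junctions p"
      unfolding SG_junctions_iff using w(2) by (intro exI[of _ w] exI[of _ 0]) simp
    ultimately show "\<exists>y\<in>SG_junctions p. dist y x < e" by blast
  qed
qed

lemma compact_invariant_eq_closure_SG_junctions:
  assumes K: "compact K" "K \<noteq> {}" "K = (\<Union>l\<in>{0,1,2}. SG_map p l ` K)"
  shows "K = closure (SG_junctions p)"
proof
  have "SG_map p l x \<in> K" if "x \<in> K" "l < 3" for x l
  proof -
    have "SG_map p l x \<in> (\<Union>l\<in>{0,1,2}. SG_map p l ` K)" using that by (auto simp: less_3_iff)
    then show ?thesis by (subst K(3))
  qed
  moreover obtain x0 where "x0 \<in> K" using K(2) by blast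
  ultimately have "SG_junctions p \<subseteq> K"
    using compact_imp_closed[OF K(1)] by (intro SG_junctions_subset_invariant)
  then show "closure (SG_junctions p) \<subseteq> K" using compact_imp_closed[OF K(1)] by (rule closure_minimal)
  show "K \<subseteq> closure (SG_junctions p)"
    using compact_imp_bounded[OF K(1)] equalityD1[OF K(3)] by (rule invariant_subset_closure_SG_junctions)
qed

lemma SG_eq_closure_SG_junctions: "SG p = closure (SG_junctions p)"
  unfolding SG_def
proof (rule the_equality)
  have "compact (closure (SG_junctions p))"
    by (simp add: compact_closure bounded_SG_junctions)
  moreover have "closure (SG_junctions p) \<noteq> {}"
    using vertex_in_SG_junctions[of 0 p] closure_subset[of "SG_junctions p"] by auto
  ultimately show "compact (closure (SG_junctions p)) \<and> closure (SG_junctions p) \<noteq> {} \<and>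
      closure (SG_junctions p) = (\<Union>l\<in>{0,1,2}. SG_map p l ` closure (SG_junctions p))"
    using closure_SG_junctions_invariant by (intro conjI)
next
  fix K assume "compact K \<and> K \<noteq> {} \<and> K = (\<Union>i\<in>{0,1,2}. SG_map p i ` K)"
  then show "K = closure (SG_junctions p)"
    by (elim conjE) (rule compact_invariant_eq_closure_SG_junctions)
qed

definition dyadic_grid :: "real set" where
  "dyadic_grid = {real m / 2^n | m n. m \<le> 2^n}"

lemma dyadic_grid_subset: "dyadic_grid \<subseteq> {0..1}"
  by (auto simp: dyadic_grid_def divide_le_eq_1)

lemma dyadic_approx:
  assumes "t \<in> {0..1::real}"
  obtains m where "m \<le> 2^n" "\<bar>t - real m / 2^n\<bar> \<le> 1 / 2^n"
proof
  define m where "m = nat \<lfloor>t * 2^n\<rfloor>"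
  have "0 \<le> t * 2^n" "t * 2^n \<le> 2^n" using assms by auto
  then have m: "real m \<le> t * 2^n" "t * 2^n < real m + 1" "real m \<le> 2^n"
    unfolding m_def by linarith+
  then show "m \<le> 2^n" by simp
  have "\<bar>t - real m / 2^n\<bar> = \<bar>t * 2^n - real m\<bar> / 2^n" by (simp add: field_simps)
  also have "\<dots> \<le> 1 / 2^n" using m by (intro divide_right_mono) auto
  finally show "\<bar>t - real m / 2^n\<bar> \<le> 1 / 2^n" .
qed

lemma closure_dyadic_grid: "closure dyadic_grid = {0..1}"
proof
  show "closure dyadic_grid \<subseteq> {0..1}"
    using dyadic_grid_subset by (rule closure_minimal) simp
  show "{0..1} \<subseteq> closure dyadic_grid"
  proof
    fix t :: real assume t: "t \<in> {0..1}"
    show "t \<in> closure dyadic_grid"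
      unfolding closure_approachable
    proof (intro allI impI)
      fix e :: real assume "0 < e"
      then obtain n where n: "1 / 2^n < e" using ex_divide_pow2_less by blast
      obtain m where "m \<le> 2^n" "\<bar>t - real m / 2^n\<bar> \<le> 1 / 2^n" using dyadic_approx[OF t] .
      then show "\<exists>s\<in>dyadic_grid. dist s t < e"
        using n by (intro bexI[of _ "real m / 2^n"]) (auto simp: dyadic_grid_def dist_real_def)
    qed
  qed
qed

lemma dyadic_in_grid:
  assumes "dyadic t" "t \<in> {0..1}"
  shows "t \<in> dyadic_grid"
proof -
  obtain k :: int and n where t: "t = of_int k / 2^n" using assms(1) unfolding dyadic_def by blast
  then have k: "of_int k = t * 2^n" by simp
  have "0 \<le> t * 2^n" "t * 2^n \<le> 1 * 2^n" using assms(2) by (auto intro: mult_right_mono)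
  then have "0 \<le> k" "of_int k \<le> (2::real)^n" unfolding k[symmetric] by simp_all
  then have "nat k \<le> 2^n" "t = real (nat k) / 2^n"
    using t by simp_all
  then show ?thesis unfolding dyadic_grid_def by blast
qed

lemma edge_dyadic_in_SG_junctions:
  assumes "i < 3" "j < 3" "m \<le> 2^n"
  shows "edge_point p i j (real m / 2^n) \<in> SG_junctions p"
  using assms(3)
proof (induction n arbitrary: m)
  case 0
  then have "m = 0 \<or> m = 1" by auto
  then show ?case using vertex_in_SG_junctions assms(1,2) by auto
next
  case (Suc n)
  show ?case
  proof (cases "m \<le> 2^n")
    case True
    have "edge_point p i j (real m / 2^Suc n)
        = SG_map p i (edge_point p i j (real m / 2^n))"
      unfolding SG_map_edge_left by simp
    then show ?thesis using Suc.IH[OF True] SG_map_in_SG_junctions assms(1) by simp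
  next
    case False
    then have "m - 2^n \<le> 2^n" "real (m - 2^n) = real m - 2^n" using Suc.prems by (auto simp: of_nat_diff)
    moreover have "edge_point p i j (real m / 2^Suc n)
        = SG_map p j (edge_point p i j ((real m - 2^n) / 2^n))"
      unfolding SG_map_edge_right by (simp add: field_simps)
    ultimately show ?thesis using Suc.IH[of "m - 2^n"] SG_map_in_SG_junctions assms(2) by simp
  qed
qed

lemma edge_point_in_SG:
  assumes "i < 3" "j < 3" "t \<in> {0..1}"
  shows "edge_point p i j t \<in> SG p"
proof -
  have "continuous_on (closure dyadic_grid) (edge_point p i j)"
    by (intro continuous_intros)
  then have "(edge_point p i j) ` closure dyadic_grid \<subseteq> closure (SG_junctions p)"
    using edge_dyadic_in_SG_junctions[OF assms(1,2)] closure_subset[of "SG_junctions p"]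
    by (intro image_closure_subset) (auto simp: dyadic_grid_def)
  then show ?thesis
    using assms(3) by (auto simp: closure_dyadic_grid SG_eq_closure_SG_junctions image_subset_iff)
qed

lemma continuous_on_edge_restr:
  assumes "continuous_on (SG p) f" "i < 3" "j < 3"
  shows "continuous_on {0..1} (edge_restr p f i j)"
  unfolding edge_restr_def
  by (rule continuous_on_compose2[OF assms(1)]) (auto intro!: continuous_intros edge_point_in_SG assms)

section \<open>Harmonic extension along an edge\<close>

(* Values of a harmonic function at the left end, the right end and the apex of a cell lying
   on an edge; harm_left and harm_right give the values for its two halves. *)
type_synonym cell_data = "real \<times> real \<times> real"

definition harm_left :: "cell_data \<Rightarrow> cell_data" where
  "harm_left = (\<lambda>(x, y, z). (x, (2*x + 2*y + z) / 5, (2*x + 2*z + y) / 5))"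

definition harm_right :: "cell_data \<Rightarrow> cell_data" where
  "harm_right = (\<lambda>(x, y, z). ((2*x + 2*y + z) / 5, y, (2*y + 2*z + x) / 5))"

definition slope_left :: "cell_data \<Rightarrow> real" where
  "slope_left = (\<lambda>(x, y, z). y + z - 2*x)"

definition slope_right :: "cell_data \<Rightarrow> real" where
  "slope_right = (\<lambda>(x, y, z). x + z - 2*y)"

definition skew :: "cell_data \<Rightarrow> real" where
  "skew = (\<lambda>(x, y, z). z - y)"

definition nonconst :: "cell_data \<Rightarrow> bool" where
  "nonconst = (\<lambda>(x, y, z). \<not> (x = y \<and> y = z))"

(* The m-th cell of level n, counted from the left end of the edge (m < 2^n). *)
fun cell :: "nat \<Rightarrow> nat \<Rightarrow> cell_data \<Rightarrow> cell_data" where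
  "cell 0 m d = d"
| "cell (Suc n) m d = (if m < 2^n then cell n m (harm_left d) else cell n (m - 2^n) (harm_right d))"

(* The slope vanishes at the junction point m/2^n (m \<le> 2^n): that of the cell to its right, or
   for m = 2^n that of the cell to its left; at interior points both agree by cell_adjacent. *)
definition flat_at :: "nat \<Rightarrow> nat \<Rightarrow> cell_data \<Rightarrow> bool" where
  "flat_at n m d \<longleftrightarrow>
     (if m < 2^n then slope_left (cell n m d) = 0 else slope_right (cell n (m - 1) d) = 0)"

lemma slope_left_harm_left [simp]: "slope_left (harm_left d) = 3/5 * slope_left d"
  by (cases d) (simp add: slope_left_def harm_left_def field_simps)

lemma slope_right_harm_right [simp]: "slope_right (harm_right d) = 3/5 * slope_right d"
  by (cases d) (simp add: slope_right_def harm_right_def field_simps)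

lemma skew_harm_left [simp]: "skew (harm_left d) = 1/5 * skew d"
  by (cases d) (simp add: skew_def harm_left_def field_simps)

lemma fst_harm_left [simp]: "fst (harm_left d) = fst d"
  by (cases d) (simp add: harm_left_def)

lemma slope_right_harm_left: "slope_right (harm_left d) = 3/5 * (fst d - fst (snd d))"
  by (cases d) (simp add: slope_right_def harm_left_def field_simps)

lemma slope_left_harm_right: "slope_left (harm_right d) = 3/5 * (fst (snd d) - fst d)"
  by (cases d) (simp add: slope_left_def harm_right_def field_simps)

lemma slope_right_eq: "slope_right d = slope_left d + 3 * (fst d - fst (snd d))"
  by (cases d) (simp add: slope_left_def slope_right_def field_simps)

lemma nonconst_harm_left: "nonconst d \<Longrightarrow> nonconst (harm_left d)"
  by (cases d) (auto simp: nonconst_def harm_left_def field_simps)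

lemma nonconst_harm_right: "nonconst d \<Longrightarrow> nonconst (harm_right d)"
  by (cases d) (auto simp: nonconst_def harm_right_def field_simps)

lemma nonconst_iff_slope_left: "nonconst d \<longleftrightarrow> \<not> (slope_left d = 0 \<and> fst d = fst (snd d))"
  by (cases d) (auto simp: nonconst_def slope_left_def)

lemma nonconst_iff_slope_right: "nonconst d \<longleftrightarrow> \<not> (slope_right d = 0 \<and> fst d = fst (snd d))"
  by (cases d) (auto simp: nonconst_def slope_right_def)

lemma cell_first:
  "slope_left (cell n 0 d) = (3/5)^n * slope_left d \<and> skew (cell n 0 d) = (1/5)^n * skew d
     \<and> fst (cell n 0 d) = fst d"
  by (induction n arbitrary: d) auto

lemma cell_last: "slope_right (cell n (2^n - 1) d) = (3/5)^n * slope_right d"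
proof (induction n arbitrary: d)
  case (Suc n)
  have "\<not> (2::nat)^Suc n - 1 < 2^n" "(2::nat)^Suc n - 1 - 2^n = 2^n - 1" by simp_all
  then show ?case using Suc by simp
qed simp

lemma cell_children:
  "m < 2^n \<Longrightarrow> cell (Suc n) (2*m) d = harm_left (cell n m d) \<and>
     cell (Suc n) (2*m + 1) d = harm_right (cell n m d)"
proof (induction n arbitrary: m d)
  case (Suc n)
  show ?case
  proof (cases "m < 2^n")
    case False
    have "2*m - 2^Suc n = 2*(m - 2^n)" "2*m + 1 - 2^Suc n = 2*(m - 2^n) + 1" "m - 2^n < 2^n"
      using False Suc.prems by auto
    then show ?thesis using Suc.IH[of "m - 2^n" "harm_right d"] False by simp
  qed (use Suc.IH in simp)
qed simp

lemma cell_adjacent: "0 < m \<Longrightarrow> m < 2^n \<Longrightarrow> slope_right (cell n (m - 1) d) = - slope_left (cell n m d)"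
proof (induction n arbitrary: m d)
  case (Suc n)
  consider "m < 2^n" | "m = 2^n" | "2^n < m" by linarith
  then show ?case
  proof cases
    case 2
    then show ?thesis using cell_last[of n "harm_left d"] cell_first[of n "harm_right d"]
      by (simp add: slope_right_harm_left slope_left_harm_right algebra_simps)
  next
    case 3
    have "m - 1 - 2^n = (m - 2^n) - 1" "0 < m - 2^n" "m - 2^n < 2^n" "\<not> m - 1 < 2^n"
      using 3 Suc.prems by auto
    then show ?thesis using Suc.IH[of "m - 2^n" "harm_right d"] 3 by simp
  qed (use Suc in \<open>simp add: less_imp_diff_less\<close>)
qed simp

lemma flat_at_left_half: "m \<le> 2^n \<Longrightarrow> flat_at (Suc n) m d \<longleftrightarrow> flat_at n m (harm_left d)"
  using cell_first[of n "harm_right d"] cell_last[of n "harm_left d"]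
  by (cases "m < 2^n") (auto simp: flat_at_def slope_right_harm_left slope_left_harm_right)

lemma flat_at_right_half:
  assumes "2^n \<le> m" "m \<le> 2^Suc n"
  shows "flat_at (Suc n) m d \<longleftrightarrow> flat_at n (m - 2^n) (harm_right d)"
proof -
  consider "m = 2^n" | "2^n < m \<and> m < 2^Suc n" | "m = 2^Suc n" using assms by linarith
  then show ?thesis
  proof cases
    case 3
    then have "\<not> m - 1 < 2^n" "m - 1 - 2^n = 2^n - 1" by simp_all
    then show ?thesis using 3 by (simp add: flat_at_def)
  qed (auto simp: flat_at_def)
qed

lemma flat_at_double: "m \<le> 2^n \<Longrightarrow> flat_at (Suc n) (2*m) d \<longleftrightarrow> flat_at n m d"
proof (cases "m < 2^n")
  case False
  moreover assume "m \<le> 2^n"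
  ultimately have "m = 2^n" by simp
  moreover have "(1::nat) \<le> 2^n" by simp
  ultimately have "2*m - 1 = 2 * (2^n - 1) + 1" by arith
  then show ?thesis using \<open>m = 2^n\<close> cell_children[of "2^n - 1" n d] by (simp add: flat_at_def)
next
  case True
  then show ?thesis using cell_children[OF True, of d] by (simp add: flat_at_def)
qed

lemma flat_at_refine: "m \<le> 2^n \<Longrightarrow> flat_at (n + l) (m * 2^l) d \<longleftrightarrow> flat_at n m d"
proof (induction l)
  case (Suc l)
  then have "m * 2^l \<le> 2^(n + l)" by (simp add: power_add)
  then show ?case using Suc flat_at_double[of "m * 2^l" "n + l" d] by (simp add: ac_simps)
qed simp

lemma sign_propagation:
  fixes a b c :: real
  assumes "0 \<le> a * c" "b = a + 3 * c" "\<not> (a = 0 \<and> c = 0)"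
  shows "0 \<le> a * b \<and> b \<noteq> 0"
proof -
  have "a * b = a^2 + 3 * (a * c)" using assms(2) by (simp add: algebra_simps power2_eq_square)
  then show ?thesis using assms by (smt (verit) mult_eq_0_iff power2_eq_square zero_le_power2)
qed

lemma flat_at_signs:
  assumes "flat_at n m d" "m \<le> 2^n" "nonconst d"
  shows "0 \<le> slope_left d * slope_right d \<and> (m < 2^n \<longrightarrow> slope_right d \<noteq> 0) \<and>
    (0 < m \<longrightarrow> slope_left d \<noteq> 0)"
  using assms
proof (induction n arbitrary: m d)
  case 0
  then have "m \<in> {0, 1}" by auto
  then show ?case using 0 by (cases d) (auto simp: flat_at_def slope_left_def slope_right_def nonconst_def)
next
  case (Suc n)
  show ?case
  proof (cases "m \<le> 2^n")
    case True
    then have "flat_at n m (harm_left d)" using Suc.prems(1) flat_at_left_half by simp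
    then have IH: "0 \<le> slope_left (harm_left d) * slope_right (harm_left d) \<and>
        (0 < m \<longrightarrow> slope_left (harm_left d) \<noteq> 0)"
      using Suc.IH[OF _ True nonconst_harm_left[OF Suc.prems(3)]] by blast
    then have "0 \<le> slope_left d * (fst d - fst (snd d))"
      by (simp add: slope_right_harm_left zero_le_mult_iff)
    then have "0 \<le> slope_left d * slope_right d \<and> slope_right d \<noteq> 0"
      by (rule sign_propagation[OF _ slope_right_eq]) (use Suc.prems(3) nonconst_iff_slope_left in auto)
    then show ?thesis using IH by simp
  next
    case False
    then have m: "2^n \<le> m" "m - 2^n \<le> 2^n" using Suc.prems(2) by auto
    then have "flat_at n (m - 2^n) (harm_right d)" using Suc.prems flat_at_right_half by simp
    then have IH: "0 \<le> slope_left (harm_right d) * slope_right (harm_right d) \<and>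
        (m - 2^n < 2^n \<longrightarrow> slope_right (harm_right d) \<noteq> 0)"
      using Suc.IH[OF _ m(2) nonconst_harm_right[OF Suc.prems(3)]] by blast
    then have "0 \<le> slope_right d * (fst (snd d) - fst d)"
      by (auto simp: slope_left_harm_right zero_le_mult_iff)
    moreover have "slope_left d = slope_right d + 3 * (fst (snd d) - fst d)"
      using slope_right_eq[of d] by simp
    ultimately have "0 \<le> slope_right d * slope_left d \<and> slope_left d \<noteq> 0"
      by (rule sign_propagation) (use Suc.prems(3) nonconst_iff_slope_right in auto)
    then show ?thesis using IH False by (auto simp: mult.commute)
  qed
qed

lemma flat_at_not_both_halves:
  assumes "flat_at n m (harm_left d)" "m < 2^n" "flat_at n m' (harm_right d)" "0 < m'" "m' \<le> 2^n"
    and "nonconst d"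
  shows False
proof -
  define c where "c = fst d - fst (snd d)"
  have "0 \<le> slope_left (harm_left d) * slope_right (harm_left d)" "slope_right (harm_left d) \<noteq> 0"
    using flat_at_signs[OF assms(1) _ nonconst_harm_left] assms by auto
  then have al: "0 \<le> slope_left d * c" and "c \<noteq> 0"
    by (auto simp: c_def slope_right_harm_left zero_le_mult_iff)
  have "0 \<le> slope_left (harm_right d) * slope_right (harm_right d)"
    using flat_at_signs[OF assms(3) _ nonconst_harm_right] assms by auto
  then have "slope_right d * c \<le> 0"
    by (auto simp: c_def slope_left_harm_right zero_le_mult_iff mult_le_0_iff)
  moreover have "slope_right d = slope_left d + 3 * c"
    using slope_right_eq unfolding c_def .
  then have "slope_right d * c = slope_left d * c + 3 * c^2"
    by (simp add: algebra_simps power2_eq_square)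
  ultimately show False using al \<open>c \<noteq> 0\<close> by (smt (verit) zero_less_power2)
qed

lemma flat_at_unique:
  assumes "flat_at n m d" "flat_at n m' d" "m \<le> 2^n" "m' \<le> 2^n" "nonconst d"
  shows "m = m'"
  using assms
proof (induction n arbitrary: m m' d)
  case 0
  then have "m \<in> {0, 1}" "m' \<in> {0, 1}" by auto
  then show ?case using 0 by (cases d) (auto simp: flat_at_def slope_left_def slope_right_def nonconst_def)
next
  case (Suc n)
  note left = flat_at_left_half[of _ n d] and right = flat_at_right_half[of n _ d]
  consider "m \<le> 2^n" "m' \<le> 2^n" | "2^n \<le> m" "2^n \<le> m'" | "m < 2^n" "2^n < m'"
    | "m' < 2^n" "2^n < m"
    by linarith
  then show ?case
  proof cases
    case 1
    then show ?thesis
      using Suc.IH[of m "harm_left d" m'] Suc.prems left[of m] left[of m'] nonconst_harm_left by simp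
  next
    case 2
    then have "m - 2^n = m' - 2^n"
      using Suc.IH[of "m - 2^n" "harm_right d" "m' - 2^n"] Suc.prems right[of m] right[of m']
        nonconst_harm_right by simp
    then show ?thesis using 2 by simp
  next
    case 3
    then have "flat_at n m (harm_left d)" "flat_at n (m' - 2^n) (harm_right d)"
      using Suc.prems left[of m] right[of m'] by auto
    moreover have "m' - 2^n \<le> 2^n" using Suc.prems(4) by simp
    ultimately show ?thesis using flat_at_not_both_halves[of n m d "m' - 2^n"] Suc.prems(5) 3 by simp
  next
    case 4
    then have "flat_at n m' (harm_left d)" "flat_at n (m - 2^n) (harm_right d)"
      using Suc.prems left[of m'] right[of m] by auto
    moreover have "m - 2^n \<le> 2^n" using Suc.prems(3) by simp
    ultimately show ?thesis using flat_at_not_both_halves[of n m' d "m - 2^n"] Suc.prems(5) 4 by simp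
  qed
qed

section \<open>Harmonic functions on an edge\<close>

(* SG_harmonic without the continuity requirement, so that it passes to f \<circ> SG_map p l. *)
definition SG_harmonic_eqs :: "(nat \<Rightarrow> complex) \<Rightarrow> (complex \<Rightarrow> real) \<Rightarrow> bool" where
  "SG_harmonic_eqs p f \<longleftrightarrow> (\<forall>m. \<forall>w\<in>SG_words m. \<forall>i j k. {i, j, k} = {0,1,2::nat} \<longrightarrow>
      f ((SG_word p w (p i) + SG_word p w (p j)) / 2)
        = (2 * f (SG_word p w (p i)) + 2 * f (SG_word p w (p j)) + f (SG_word p w (p k))) / 5)"

lemma SG_harmonic_iff: "SG_harmonic p f \<longleftrightarrow> continuous_on (SG p) f \<and> SG_harmonic_eqs p f"
  by (simp add: SG_harmonic_def SG_harmonic_eqs_def)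

lemma SG_harmonic_eqs_base:
  "SG_harmonic_eqs p f \<Longrightarrow> {i, j, k} = {0,1,2::nat} \<Longrightarrow>
     f ((p i + p j) / 2) = (2 * f (p i) + 2 * f (p j) + f (p k)) / 5"
  unfolding SG_harmonic_eqs_def by (drule spec[of _ 0], drule bspec[of _ _ "[]"]) (auto simp: SG_words_def)

lemma SG_harmonic_eqs_comp:
  assumes "SG_harmonic_eqs p f" "l < 3"
  shows "SG_harmonic_eqs p (f \<circ> SG_map p l)"
  unfolding SG_harmonic_eqs_def
proof (intro allI ballI impI)
  fix m w i j k assume "w \<in> SG_words m" "{i, j, k} = {0,1,2::nat}"
  moreover have "l # w \<in> SG_words (Suc m)" using \<open>w \<in> SG_words m\<close> assms(2) by (auto simp: SG_words_def)
  ultimately have "f ((SG_word p (l # w) (p i) + SG_word p (l # w) (p j)) / 2) =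
      (2 * f (SG_word p (l # w) (p i)) + 2 * f (SG_word p (l # w) (p j)) + f (SG_word p (l # w) (p k))) / 5"
    using assms(1) unfolding SG_harmonic_eqs_def by blast
  moreover have "(SG_map p l a + SG_map p l b) / 2 = SG_map p l ((a + b) / 2)" for a b
    by (simp add: SG_map_def field_simps)
  ultimately show "(f \<circ> SG_map p l) ((SG_word p w (p i) + SG_word p w (p j)) / 2) =
      (2 * (f \<circ> SG_map p l) (SG_word p w (p i)) + 2 * (f \<circ> SG_map p l) (SG_word p w (p j)) +
       (f \<circ> SG_map p l) (SG_word p w (p k))) / 5"
    by (simp add: SG_word_Cons)
qed

lemma SG_harmonic_eqs_uminus: "SG_harmonic_eqs p f \<Longrightarrow> SG_harmonic_eqs p (\<lambda>x. - f x)"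
  unfolding SG_harmonic_eqs_def by (auto simp: field_simps)

definition edge_data ::
    "(nat \<Rightarrow> complex) \<Rightarrow> (complex \<Rightarrow> real) \<Rightarrow> nat \<Rightarrow> nat \<Rightarrow> nat \<Rightarrow> cell_data" where
  "edge_data p h i j k = (h (p i), h (p j), h (p k))"

lemma SG_map_vertex: "SG_map p l (p m) = (p l + p m) / 2"
  by (simp add: SG_map_def add.commute)

lemma edge_data_comp_left:
  assumes "SG_harmonic_eqs p h" "{i, j, k} = {0,1,2::nat}"
  shows "edge_data p (h \<circ> SG_map p i) i j k = harm_left (edge_data p h i j k)"
proof -
  have "{i, k, j} = {0,1,2::nat}" using assms(2) by (simp add: insert_commute)
  from SG_harmonic_eqs_base[OF assms(1) this] show ?thesis
    using SG_harmonic_eqs_base[OF assms]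
    by (simp add: edge_data_def harm_left_def SG_map_vertex SG_map_def)
qed

lemma edge_data_comp_right:
  assumes "SG_harmonic_eqs p h" "{i, j, k} = {0,1,2::nat}"
  shows "edge_data p (h \<circ> SG_map p j) i j k = harm_right (edge_data p h i j k)"
proof -
  have "{j, i, k} = {0,1,2::nat}" "{j, k, i} = {0,1,2::nat}" using assms(2) by (auto simp: insert_commute)
  from SG_harmonic_eqs_base[OF assms(1) this(1)] SG_harmonic_eqs_base[OF assms(1) this(2)]
  show ?thesis
    by (simp add: edge_data_def harm_right_def SG_map_vertex SG_map_def algebra_simps)
qed

lemma edge_restr_comp_left: "edge_restr p (h \<circ> SG_map p i) i j u = edge_restr p h i j (u / 2)"
  by (simp add: edge_restr_def SG_map_edge_left)

lemma edge_restr_comp_right: "edge_restr p (h \<circ> SG_map p j) i j u = edge_restr p h i j ((1 + u) / 2)"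
  by (simp add: edge_restr_def SG_map_edge_right)

lemma edge_restr_swap: "edge_restr p h j i v = edge_restr p h i j (1 - v)"
  unfolding edge_restr_def by (rule arg_cong[of _ _ h]) (simp add: algebra_simps)

lemma third_vertex: "l < 3 \<Longrightarrow> m < 3 \<Longrightarrow> l \<noteq> m \<Longrightarrow> {l, m, 3 - l - m} = {0,1,2::nat}"
  by (auto simp: less_3_iff)

lemma vertices_less_3: "{i, j, k} = {0,1,2::nat} \<Longrightarrow> i < 3 \<and> j < 3 \<and> k < 3"
  by (metis insertI1 insert_commute less_3_iff)

lemma cell_function_exists:
  assumes "SG_harmonic_eqs p h" "{i, j, k} = {0,1,2::nat}" "m < 2^n"
  shows "\<exists>h'. SG_harmonic_eqs p h' \<and>
    (\<forall>u. edge_restr p h' i j u = edge_restr p h i j ((real m + u) / 2^n)) \<and>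
    edge_data p h' i j k = cell n m (edge_data p h i j k)"
  using assms(1,3)
proof (induction n arbitrary: h m)
  case 0
  then show ?case by auto
next
  case (Suc n)
  have ij: "i < 3" "j < 3" using vertices_less_3[OF assms(2)] by auto
  show ?case
  proof (cases "m < 2^n")
    case True
    obtain h' where h': "SG_harmonic_eqs p h'"
      "\<forall>u. edge_restr p h' i j u = edge_restr p (h \<circ> SG_map p i) i j ((real m + u) / 2^n)"
      "edge_data p h' i j k = cell n m (edge_data p (h \<circ> SG_map p i) i j k)"
      using Suc.IH[OF SG_harmonic_eqs_comp[OF Suc.prems(1) ij(1)] True] by blast
    then show ?thesis
      using True edge_data_comp_left[OF Suc.prems(1) assms(2)]
      by (intro exI[of _ h']) (simp add: edge_restr_comp_left mult.commute)
  next
    case False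
    then have m: "m - 2^n < 2^n" "real (m - 2^n) = real m - 2^n" using Suc.prems(2) by (auto simp: of_nat_diff)
    obtain h' where h': "SG_harmonic_eqs p h'"
      "\<forall>u. edge_restr p h' i j u = edge_restr p (h \<circ> SG_map p j) i j ((real (m - 2^n) + u) / 2^n)"
      "edge_data p h' i j k = cell n (m - 2^n) (edge_data p (h \<circ> SG_map p j) i j k)"
      using Suc.IH[OF SG_harmonic_eqs_comp[OF Suc.prems(1) ij(2)] m(1)] by blast
    moreover have "(1 + (real (m - 2^n) + u) / 2^n) / 2 = (real m + u) / 2^Suc n" for u :: real
      unfolding m(2) by (simp add: field_simps)
    ultimately have "\<forall>u. edge_restr p h' i j u = edge_restr p h i j ((real m + u) / 2^Suc n)"
      by (simp only: edge_restr_comp_right) simp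
    then show ?thesis
      using h'(1,3) False edge_data_comp_right[OF Suc.prems(1) assms(2)] by auto
  qed
qed

lemma edge_restr_dyadic:
  assumes "SG_harmonic_eqs p h" "{i, j, k} = {0,1,2::nat}" "m < 2^n"
  shows "edge_restr p h i j (real m / 2^n) = fst (cell n m (edge_data p h i j k))"
proof -
  obtain h' where "\<forall>u. edge_restr p h' i j u = edge_restr p h i j ((real m + u) / 2^n)"
    "edge_data p h' i j k = cell n m (edge_data p h i j k)"
    using cell_function_exists[OF assms] by blast
  then show ?thesis
    by (metis add_0_right edge_data_def edge_restr_def fst_conv mult_zero_left of_real_0)
qed

definition cell_min :: "cell_data \<Rightarrow> real" where
  "cell_min = (\<lambda>(x, y, z). min x (min y z))"

lemma cell_min_le_cell: "cell_min d \<le> cell_min (cell n m d)"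
proof (induction n arbitrary: m d)
  case (Suc n)
  have "cell_min d \<le> cell_min (harm_left d)" "cell_min d \<le> cell_min (harm_right d)"
    by (cases d; auto simp: cell_min_def harm_left_def harm_right_def)+
  then show ?case using Suc.IH order_trans by (simp split: if_split) blast
qed simp

lemma cell_min_le: "cell_min d \<le> fst d" "cell_min d \<le> fst (snd d)"
  by (cases d; simp add: cell_min_def)+

lemma edge_min_principle:
  assumes "SG_harmonic_eqs p h" "{i, j, k} = {0,1,2::nat}"
    and "continuous_on {0..1} (edge_restr p h i j)" "t \<in> {0..1}"
  shows "cell_min (edge_data p h i j k) \<le> edge_restr p h i j t"
proof (rule continuous_ge_on_closure[where S = dyadic_grid and f = "edge_restr p h i j" and x = t])
  show "continuous_on (closure dyadic_grid) (edge_restr p h i j)" "t \<in> closure dyadic_grid"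
    using assms(3,4) by (simp_all add: closure_dyadic_grid)
  fix s assume "s \<in> dyadic_grid"
  then obtain m n where s: "s = real m / 2^n" "m \<le> 2^n" by (auto simp: dyadic_grid_def)
  show "cell_min (edge_data p h i j k) \<le> edge_restr p h i j s"
  proof (cases "m < 2^n")
    case True
    then show ?thesis
      using s edge_restr_dyadic[OF assms(1,2) True] cell_min_le_cell cell_min_le(1) order_trans by metis
  next
    case False
    then have "s = 1" using s by simp
    then show ?thesis
      using cell_min_le(2)[of "edge_data p h i j k"] by (simp add: edge_restr_def edge_data_def)
  qed
qed

lemma SG_harmonic_eqs_const_word:
  assumes "set w \<subseteq> {0,1,2}" "j < 3" "SG_harmonic_eqs p g" "\<And>l. l < 3 \<Longrightarrow> g (p l) = c"
  shows "g (SG_word p w (p j)) = c"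
  using assms
proof (induction w arbitrary: g)
  case (Cons l w)
  have l: "l < 3" using Cons.prems(1) by (simp add: less_3_iff)
  have vertex: "(g \<circ> SG_map p l) (p m) = c" if "m < 3" for m
  proof (cases "m = l")
    case False
    then have "3 - l - m < 3" by arith
    then show ?thesis
      using SG_harmonic_eqs_base[OF Cons.prems(3) third_vertex[OF l that not_sym[OF False]]]
        Cons.prems(4) l that
      by (simp add: SG_map_vertex)
  next
    case True
    then show ?thesis using Cons.prems(4) l by (simp add: SG_map_def)
  qed
  have "(g \<circ> SG_map p l) (SG_word p w (p j)) = c"
  proof (rule Cons.IH)
    show "set w \<subseteq> {0,1,2}" "j < 3" using Cons.prems(1,2) by auto
    show "SG_harmonic_eqs p (g \<circ> SG_map p l)" by (rule SG_harmonic_eqs_comp[OF Cons.prems(3) l])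
  qed (rule vertex)
  then show ?case by (simp add: SG_word_Cons)
qed simp

lemma SG_harmonic_const_on_SG:
  assumes "SG_harmonic p f" "f (p 0) = f (p 1)" "f (p 1) = f (p 2)" "x \<in> SG p"
  shows "f x = f (p 0)"
proof (rule continuous_constant_on_closure[where S = "SG_junctions p"])
  show "continuous_on (closure (SG_junctions p)) f" "x \<in> closure (SG_junctions p)"
    using assms(1,4) by (simp_all add: SG_harmonic_iff SG_eq_closure_SG_junctions)
  have vertex: "f (p l) = f (p 0)" if "l < 3" for l
    using that assms(2,3) by (auto simp: less_3_iff)
  have eqs: "SG_harmonic_eqs p f" using assms(1) by (simp add: SG_harmonic_iff)
  show "f y = f (p 0)" if "y \<in> SG_junctions p" for y
    using that SG_harmonic_eqs_const_word[OF _ _ eqs vertex] by (auto simp: SG_junctions_iff)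
qed

section \<open>Infinite one-sided derivatives\<close>

lemma filtermap_at_right_affine:
  assumes "0 < r"
  shows "filtermap (\<lambda>u. t + r * u) (at_right 0) = at_right (t::real)"
proof -
  have "filtermap (\<lambda>u. t + r * u) (at_right 0) = filtermap (\<lambda>x. x + t) (filtermap (times r) (at_right 0))"
    by (simp add: filtermap_filtermap add.commute)
  also have "\<dots> = at_right t"
    using filtermap_times_pos_at_right[OF assms, of 0] at_right_to_0[of t] by simp
  finally show ?thesis .
qed

lemma filtermap_at_left_affine:
  assumes "0 < r"
  shows "filtermap (\<lambda>u. t - r * u) (at_right 0) = at_left (t::real)"
proof -
  have "filtermap (\<lambda>u. t - r * u) (at_right 0) = filtermap uminus (filtermap (\<lambda>u. - t + r * u) (at_right 0))"
    by (simp add: filtermap_filtermap)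
  then show ?thesis by (simp only: filtermap_at_right_affine[OF assms] at_left_minus[of t])
qed

lemma filterlim_at_right_rescale:
  fixes G :: "real \<Rightarrow> real"
  assumes "0 < r" "filterlim (\<lambda>u. c * ((G (t + r * u) - G t) / u)) at_top (at_right 0)"
  shows "filterlim (\<lambda>s. c * ((G s - G t) / (s - t))) at_top (at_right t)"
proof -
  have eq: "(1 / r) * (c * ((G (t + r * u) - G t) / u)) = c * ((G (t + r * u) - G t) / ((t + r * u) - t))"
    for u
    using assms(1) by (cases "u = 0") (simp_all add: field_simps)
  have "filterlim (\<lambda>u. (1 / r) * (c * ((G (t + r * u) - G t) / u))) at_top (at_right 0)"
    by (rule filterlim_tendsto_pos_mult_at_top[OF tendsto_const[of "1 / r"] _ assms(2)]) (simp add: assms(1))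
  then show ?thesis
    unfolding eq filtermap_at_right_affine[OF assms(1), of t, symmetric] filterlim_filtermap .
qed

lemma filterlim_at_left_rescale:
  fixes G :: "real \<Rightarrow> real"
  assumes "0 < r" "filterlim (\<lambda>u. c * ((G (t - r * u) - G t) / u)) at_top (at_right 0)"
  shows "filterlim (\<lambda>s. - c * ((G s - G t) / (s - t))) at_top (at_left t)"
proof -
  have eq: "(1 / r) * (c * ((G (t - r * u) - G t) / u)) = - c * ((G (t - r * u) - G t) / ((t - r * u) - t))"
    for u
    using assms(1) by (cases "u = 0") (simp_all add: field_simps)
  have "filterlim (\<lambda>u. (1 / r) * (c * ((G (t - r * u) - G t) / u))) at_top (at_right 0)"
    by (rule filterlim_tendsto_pos_mult_at_top[OF tendsto_const[of "1 / r"] _ assms(2)]) (simp add: assms(1))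
  then show ?thesis
    unfolding eq filtermap_at_left_affine[OF assms(1), of t, symmetric] filterlim_filtermap .
qed

lemma infinite_derivI:
  assumes "t \<in> {0..1}" "c = 1 \<or> c = -1"
    and "t < 1 \<Longrightarrow> filterlim (\<lambda>s. c * ((G s - G t) / (s - t))) at_top (at_right t)"
    and "0 < t \<Longrightarrow> filterlim (\<lambda>s. c * ((G s - G t) / (s - t))) at_top (at_left t)"
  shows "infinite_deriv G t"
proof -
  have lim: "filterlim (\<lambda>s. c * ((G s - G t) / (s - t))) at_top (at t within {0..1})"
  proof (cases "t = 0 \<or> t = 1")
    case True
    then show ?thesis using assms(3,4) by (auto simp: at_within_Icc_at_right at_within_Icc_at_left)
  next
    case False
    then have "at t within {0..1} = at t" using assms(1) by (intro at_within_Icc_at) auto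
    then show ?thesis using False assms(1,3,4) by (simp add: filterlim_at_split)
  qed
  show ?thesis
  proof (cases "c = 1")
    case True
    then show ?thesis using lim unfolding infinite_deriv_def by simp
  next
    case False
    then have "filterlim (\<lambda>s. - ((G s - G t) / (s - t))) at_top (at t within {0..1})"
      using lim assms(2) by (simp add: minus_divide_left)
    then show ?thesis unfolding infinite_deriv_def filterlim_uminus_at_bot by blast
  qed
qed

lemma ex_dyadic_level:
  fixes v :: real
  assumes "0 < v" "v \<le> 1 / 2^N"
  obtains n where "N \<le> n" "1 / 2^Suc n < v" "v \<le> 1 / 2^n"
proof -
  obtain M where M: "1 / 2^M < v" using ex_divide_pow2_less[OF assms(1)] by blast
  have "v \<le> 1" using assms(2) order_trans[of v "1 / 2^N" 1] by simp
  have "\<exists>n. 1 / 2^Suc n < v \<and> v \<le> 1 / 2^n" if "1 / 2^M < v" for M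
    using that
  proof (induction M)
    case 0
    then show ?case using \<open>v \<le> 1\<close> by simp
  next
    case (Suc M)
    show ?case
    proof (cases "1 / 2^M < v")
      case False
      then show ?thesis using Suc.prems by (intro exI[of _ M]) simp
    qed (rule Suc.IH)
  qed
  then obtain n where n: "1 / 2^Suc n < v" "v \<le> 1 / 2^n" using M by blast
  then have "1 / (2::real)^Suc n < 1 / 2^N" using assms(2) by linarith
  then have "(2::real)^N < 2^Suc n" by (simp add: field_simps)
  then have "N < Suc n" by (rule power_less_imp_less_exp[rotated]) simp
  then show ?thesis using n by (intro that[of n]) simp_all
qed

lemma continuous_on_cell_param:
  assumes "continuous_on {0..1} G" "m < 2^n"
  shows "continuous_on {0..1} (\<lambda>u. G ((real m + u) / 2^n))"
proof (rule continuous_on_compose2[OF assms(1)])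
  have "real m + 1 \<le> 2^n" using assms(2)
    by (metis Suc_leI of_nat_Suc of_nat_le_numeral_power_cancel_iff add.commute)
  then show "(\<lambda>u. (real m + u) / 2^n) ` {0..1} \<subseteq> {0..1}" by (auto simp: field_simps)
qed (intro continuous_intros, simp)

lemma cell_min_principle:
  assumes "SG_harmonic_eqs p h" "{i, j, k} = {0,1,2::nat}"
    and "continuous_on {0..1} (edge_restr p h i j)" "m < 2^n" "u \<in> {0..1}"
  shows "cell_min (cell n m (edge_data p h i j k)) \<le> edge_restr p h i j ((real m + u) / 2^n)"
proof -
  obtain h' where h': "SG_harmonic_eqs p h'"
    "\<forall>u. edge_restr p h' i j u = edge_restr p h i j ((real m + u) / 2^n)"
    "edge_data p h' i j k = cell n m (edge_data p h i j k)"
    using cell_function_exists[OF assms(1,2,4)] by blast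
  have "continuous_on {0..1} (edge_restr p h' i j)"
    using continuous_on_cell_param[OF assms(3,4)] h'(2) by simp
  then show ?thesis using edge_min_principle[OF h'(1) assms(2) _ assms(5)] h' by simp
qed

lemma cell_min_harm_right_ge:
  "0 \<le> slope_left d \<Longrightarrow> fst d + 3/10 * slope_left d - 1/2 * \<bar>skew d\<bar> \<le> cell_min (harm_right d)"
  by (cases d) (auto simp: cell_min_def harm_right_def slope_left_def skew_def abs_if field_simps)

lemma edge_increment_lower_bound:
  assumes "SG_harmonic_eqs p h" "{i, j, k} = {0,1,2::nat}"
    and "continuous_on {0..1} (edge_restr p h i j)"
    and "0 \<le> slope_left (edge_data p h i j k)" "1 / 2^Suc n \<le> v" "v \<le> 1 / 2^n"
  shows "3/10 * (3/5)^n * slope_left (edge_data p h i j k) - 1/2 * (1/5)^n * \<bar>skew (edge_data p h i j k)\<bar>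
    \<le> edge_restr p h i j v - edge_restr p h i j 0"
proof -
  define d where "d = edge_data p h i j k"
  define u where "u = v * 2^Suc n - 1"
  have u: "u \<in> {0..1}" "(real 1 + u) / 2^Suc n = v"
    using assms(5,6) by (auto simp: u_def field_simps)
  have "(1::nat) < 2^Suc n" using one_less_power[of "2::nat" "Suc n"] by simp
  from cell_min_principle[OF assms(1-3) this u(1)]
  have "cell_min (cell (Suc n) 1 d) \<le> edge_restr p h i j v" unfolding d_def u(2) .
  moreover have "cell (Suc n) 1 d = harm_right (cell n 0 d)"
    using cell_children[of 0 n d] by simp
  moreover have "0 \<le> slope_left (cell n 0 d)" using assms(4) by (simp add: cell_first d_def)
  ultimately have "fst d + 3/10 * slope_left (cell n 0 d) - 1/2 * \<bar>skew (cell n 0 d)\<bar> \<le> edge_restr p h i j v"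
    using cell_min_harm_right_ge cell_first[of n d] by (metis order_trans)
  moreover have "edge_restr p h i j 0 = fst d" by (simp add: d_def edge_restr_def edge_data_def)
  ultimately show ?thesis by (simp add: cell_first d_def abs_mult)
qed

lemma edge_quotient_lower_bound:
  assumes "SG_harmonic_eqs p h" "{i, j, k} = {0,1,2::nat}"
    and "continuous_on {0..1} (edge_restr p h i j)" "0 \<le> slope_left (edge_data p h i j k)"
    and "1 / 2^Suc n \<le> v" "v \<le> 1 / 2^n"
  defines "a \<equiv> slope_left (edge_data p h i j k)" and "b \<equiv> \<bar>skew (edge_data p h i j k)\<bar>"
  assumes "0 \<le> 3/10 * (6/5)^n * a - b / 2"
  shows "3/10 * (6/5)^n * a - b / 2 \<le> (edge_restr p h i j v - edge_restr p h i j 0) / v"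
proof -
  define X where "X = 3/10 * (3/5)^n * a - 1/2 * (1/5)^n * b"
  have "X \<le> edge_restr p h i j v - edge_restr p h i j 0"
    using edge_increment_lower_bound[OF assms(1-6)] by (simp add: X_def a_def b_def)
  have "(3/5::real)^n * 2^n = (6/5)^n" "(1/5::real)^n * 2^n = (2/5)^n"
    by (simp_all add: power_mult_distrib[symmetric])
  then have "X * 2^n = 3/10 * (6/5)^n * a - 1/2 * (2/5)^n * b"
    unfolding X_def by (simp add: algebra_simps)
  moreover have "(2/5::real)^n * b \<le> b" by (simp add: b_def mult_left_le_one_le power_le_one)
  ultimately have X: "3/10 * (6/5)^n * a - b / 2 \<le> X * 2^n" by linarith
  with assms(9) have "0 \<le> X * 2^n" by linarith
  then have "0 \<le> X" using divide_nonneg_pos[of "X * 2^n" "2^n"] by simp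
  have "0 < 1 / (2::real)^Suc n" by simp
  then have "0 < v" using assms(5) by linarith
  then have "2^n \<le> 1 / v" using assms(6) by (simp add: field_simps)
  from mult_left_mono[OF this \<open>0 \<le> X\<close>] have "X * 2^n \<le> X / v" by simp
  also have "\<dots> \<le> (edge_restr p h i j v - edge_restr p h i j 0) / v"
    using \<open>X \<le> _\<close> \<open>0 < v\<close> by (simp add: divide_right_mono)
  finally show ?thesis using X by linarith
qed

lemma slope_left_pos_imp_at_top:
  assumes "SG_harmonic_eqs p h" "{i, j, k} = {0,1,2::nat}"
    and "continuous_on {0..1} (edge_restr p h i j)" "0 < slope_left (edge_data p h i j k)"
  shows "filterlim (\<lambda>u. (edge_restr p h i j u - edge_restr p h i j 0) / u) at_top (at_right 0)"
  unfolding filterlim_at_top eventually_at_right_field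
proof
  fix B :: real
  define a where "a = slope_left (edge_data p h i j k)"
  define b where "b = \<bar>skew (edge_data p h i j k)\<bar>"
  obtain N where "(\<bar>B\<bar> + b / 2) / (3/10 * a) < (6/5::real)^N"
    using real_arch_pow[of "6/5"] by auto
  then have big: "\<bar>B\<bar> + b / 2 < 3/10 * (6/5)^N * a"
    using assms(4) by (simp add: a_def field_simps)
  show "\<exists>e>0. \<forall>v>0. v < e \<longrightarrow> B \<le> (edge_restr p h i j v - edge_restr p h i j 0) / v"
  proof (intro exI[of _ "1 / 2^N"] conjI allI impI)
    fix v :: real assume "0 < v" "v < 1 / 2^N"
    then obtain n where n: "N \<le> n" "1 / 2^Suc n < v" "v \<le> 1 / 2^n"
      using ex_dyadic_level[of v N] by (auto simp: less_imp_le)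
    then have "(6/5::real)^N \<le> (6/5)^n" by (simp add: power_increasing)
    then have "3/10 * (6/5)^N * a \<le> 3/10 * (6/5)^n * a" using assms(4) by (simp add: a_def)
    then have "\<bar>B\<bar> + b / 2 < 3/10 * (6/5)^n * a" using big by linarith
    moreover from this have nonneg: "0 \<le> 3/10 * (6/5)^n * a - b / 2" by linarith
    note bound = edge_quotient_lower_bound[OF assms(1-3) less_imp_le[OF assms(4)] less_imp_le[OF n(2)] n(3)]
    from bound[OF nonneg[unfolded a_def b_def]]
    have "3/10 * (6/5)^n * a - b / 2 \<le> (edge_restr p h i j v - edge_restr p h i j 0) / v"
      unfolding a_def b_def .
    ultimately show "B \<le> (edge_restr p h i j v - edge_restr p h i j 0) / v"
      using abs_ge_self[of B] by linarith
  qed simp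
qed

lemma slope_left_imp_at_top:
  assumes "SG_harmonic_eqs p h" "{i, j, k} = {0,1,2::nat}"
    and "continuous_on {0..1} (edge_restr p h i j)" "slope_left (edge_data p h i j k) \<noteq> 0"
  shows "filterlim (\<lambda>u. sgn (slope_left (edge_data p h i j k)) *
    ((edge_restr p h i j u - edge_restr p h i j 0) / u)) at_top (at_right 0)"
proof (cases "0 < slope_left (edge_data p h i j k)")
  case True
  then show ?thesis using slope_left_pos_imp_at_top[OF assms(1-3)] by simp
next
  case False
  have restr: "edge_restr p (\<lambda>x. - h x) i j = (\<lambda>t. - edge_restr p h i j t)"
    by (simp add: edge_restr_def fun_eq_iff)
  have "slope_left (edge_data p (\<lambda>x. - h x) i j k) = - slope_left (edge_data p h i j k)"
    by (simp add: edge_data_def slope_left_def)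
  then have "filterlim (\<lambda>u. (edge_restr p (\<lambda>x. - h x) i j u - edge_restr p (\<lambda>x. - h x) i j 0) / u)
      at_top (at_right 0)"
    using False assms(3,4) restr
    by (intro slope_left_pos_imp_at_top[OF SG_harmonic_eqs_uminus[OF assms(1)] assms(2)])
      (auto intro: continuous_intros)
  then show ?thesis using False assms(4) unfolding restr by (simp add: minus_divide_left)
qed

lemma right_derivative_at_cell:
  assumes "SG_harmonic_eqs p h" "{i, j, k} = {0,1,2::nat}"
    and "continuous_on {0..1} (edge_restr p h i j)" "m < 2^n"
    and "slope_left (cell n m (edge_data p h i j k)) \<noteq> 0"
  defines "G \<equiv> edge_restr p h i j" and "t \<equiv> real m / 2^n"
  shows "filterlim (\<lambda>s. sgn (slope_left (cell n m (edge_data p h i j k))) * ((G s - G t) / (s - t)))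
    at_top (at_right t)"
proof (rule filterlim_at_right_rescale)
  obtain h' where h': "SG_harmonic_eqs p h'"
    "\<forall>u. edge_restr p h' i j u = edge_restr p h i j ((real m + u) / 2^n)"
    "edge_data p h' i j k = cell n m (edge_data p h i j k)"
    using cell_function_exists[OF assms(1,2,4)] by blast
  have restr: "edge_restr p h' i j = (\<lambda>u. G (t + 1 / 2^n * u))"
    by (simp add: fun_eq_iff h'(2) G_def t_def add_divide_distrib)
  have "continuous_on {0..1} (edge_restr p h' i j)"
    using continuous_on_cell_param[OF assms(3,4)] h'(2) by simp
  from slope_left_imp_at_top[OF h'(1) assms(2) this] assms(5)
  show "filterlim (\<lambda>u. sgn (slope_left (cell n m (edge_data p h i j k))) *
      ((G (t + 1 / 2^n * u) - G t) / u)) at_top (at_right 0)"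
    unfolding restr h'(3) by simp
qed simp

lemma slope_left_edge_data_swap: "slope_left (edge_data p h j i k) = slope_right (edge_data p h i j k)"
  by (simp add: edge_data_def slope_left_def slope_right_def)

lemma left_derivative_at_cell:
  assumes "SG_harmonic_eqs p h" "{i, j, k} = {0,1,2::nat}"
    and "continuous_on {0..1} (edge_restr p h i j)" "0 < m" "m \<le> 2^n"
    and "slope_right (cell n (m - 1) (edge_data p h i j k)) \<noteq> 0"
  defines "G \<equiv> edge_restr p h i j" and "t \<equiv> real m / 2^n"
  shows "filterlim (\<lambda>s. - sgn (slope_right (cell n (m - 1) (edge_data p h i j k))) * ((G s - G t) / (s - t)))
    at_top (at_left t)"
proof (rule filterlim_at_left_rescale)
  have m: "m - 1 < 2^n" "real (m - 1) = real m - 1" using assms(4,5) by (auto simp: of_nat_diff)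
  obtain h' where h': "SG_harmonic_eqs p h'"
    "\<forall>u. edge_restr p h' i j u = edge_restr p h i j ((real (m - 1) + u) / 2^n)"
    "edge_data p h' i j k = cell n (m - 1) (edge_data p h i j k)"
    using cell_function_exists[OF assms(1,2) m(1)] by blast
  have restr: "edge_restr p h' j i = (\<lambda>v. G (t - 1 / 2^n * v))"
    using assms(4) by (simp add: fun_eq_iff edge_restr_swap[of p h' j i] h'(2) G_def t_def of_nat_diff Suc_le_eq field_simps)
  have "continuous_on {0..1} (\<lambda>v. edge_restr p h i j ((real (m - 1) + (1 - v)) / 2^n))"
    by (rule continuous_on_compose2[OF continuous_on_cell_param[OF assms(3) m(1)]])
      (auto intro!: continuous_intros)
  then have cont: "continuous_on {0..1} (edge_restr p h' j i)"
    by (simp add: edge_restr_swap[of p h' j i] h'(2))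
  have tri: "{j, i, k} = {0,1,2::nat}" using assms(2) by (simp add: insert_commute)
  have slope: "slope_left (edge_data p h' j i k) = slope_right (cell n (m - 1) (edge_data p h i j k))"
    by (simp add: slope_left_edge_data_swap h'(3))
  have "filterlim (\<lambda>u. sgn (slope_right (cell n (m - 1) (edge_data p h i j k))) *
      ((edge_restr p h' j i u - edge_restr p h' j i 0) / u)) at_top (at_right 0)"
    using slope_left_imp_at_top[OF h'(1) tri cont, unfolded slope, OF assms(6)] .
  then show "filterlim (\<lambda>u. sgn (slope_right (cell n (m - 1) (edge_data p h i j k))) *
      ((G (t - 1 / 2^n * u) - G t) / u)) at_top (at_right 0)"
    unfolding restr by simp
qed simp

lemma infinite_deriv_at_nonflat:
  assumes "SG_harmonic_eqs p h" "{i, j, k} = {0,1,2::nat}"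
    and "continuous_on {0..1} (edge_restr p h i j)" "m \<le> 2^n"
    and "\<not> flat_at n m (edge_data p h i j k)"
  shows "infinite_deriv (edge_restr p h i j) (real m / 2^n)"
proof -
  let ?d = "edge_data p h i j k"
  define c where "c = (if m < 2^n then sgn (slope_left (cell n m ?d)) else - sgn (slope_right (cell n (m - 1) ?d)))"
  have right: "slope_left (cell n m ?d) \<noteq> 0 \<and> sgn (slope_left (cell n m ?d)) = c" if "m < 2^n"
    using assms(5) that by (simp add: flat_at_def c_def)
  have left: "slope_right (cell n (m - 1) ?d) \<noteq> 0 \<and> - sgn (slope_right (cell n (m - 1) ?d)) = c"
    if "0 < m"
  proof (cases "m < 2^n")
    case True
    then show ?thesis using right cell_adjacent[OF that True, of ?d] by (simp add: sgn_minus)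
  next
    case False
    then show ?thesis using assms(5) by (simp add: flat_at_def c_def)
  qed
  have "real m / 2^n \<in> {0..1}" using assms(4) by (simp add: divide_le_eq_1)
  then show ?thesis
  proof (rule infinite_derivI)
    show "c = 1 \<or> c = -1"
      using right left assms(4) by (cases "m < 2^n") (auto simp: c_def sgn_if)
  next
    assume "real m / 2^n < 1"
    then have "m < 2^n" by (simp add: divide_less_eq)
    with right show "filterlim (\<lambda>s. c * ((edge_restr p h i j s - edge_restr p h i j (real m / 2^n))
        / (s - real m / 2^n))) at_top (at_right (real m / 2^n))"
      using right_derivative_at_cell[OF assms(1-3) \<open>m < 2^n\<close>] by simp
  next
    assume "0 < real m / 2^n"
    then have "0 < m" by (simp add: zero_less_divide_iff)
    with left show "filterlim (\<lambda>s. c * ((edge_restr p h i j s - edge_restr p h i j (real m / 2^n))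
        / (s - real m / 2^n))) at_top (at_left (real m / 2^n))"
      using left_derivative_at_cell[OF assms(1-3) \<open>0 < m\<close> assms(4)] by simp
  qed
qed

section \<open>The contour of the triangle\<close>

lemma edge_cases: "i < j \<Longrightarrow> j < (3::nat) \<Longrightarrow> (i = 0 \<and> j = 1) \<or> (i = 0 \<and> j = 2) \<or> (i = 1 \<and> j = 2)"
  by auto

lemma unit_equilateral_independent:
  assumes "unit_equilateral p" "of_real a * (p 1 - p 0) + of_real b * (p 2 - p 0) = 0"
  shows "a = 0 \<and> b = 0"
proof -
  define u v where "u = p 1 - p 0" and "v = p 2 - p 0"
  have side: "norm (p i - p j) = 1" if "i < 3" "j < 3" "i \<noteq> j" for i j
    using assms(1) that unfolding unit_equilateral_def by (simp add: dist_norm)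
  have norm_u: "norm u = 1" and norm_v: "norm v = 1" and norm_vu: "norm (v - u) = 1"
    using side[of 1 0] side[of 2 0] side[of 2 1] by (simp_all add: u_def v_def)
  have ab: "of_real a * u + of_real b * v = 0" using assms(2) by (simp add: u_def v_def)
  show ?thesis
  proof (cases "b = 0")
    case True
    then show ?thesis using ab norm_u by auto
  next
    case False
    define c where "c = - a / b"
    have "of_real b * v = - (of_real a * u)" using ab by (simp add: eq_neg_iff_add_eq_0 add.commute)
    then have v: "v = of_real c * u" using False by (simp add: c_def field_simps)
    have "\<bar>c\<bar> = 1" using norm_u norm_v unfolding v by (simp add: norm_mult)
    moreover have "v - u = of_real (c - 1) * u" unfolding v by (simp add: algebra_simps)
    then have "norm (v - u) = \<bar>c - 1\<bar> * norm u" by (simp only: norm_mult norm_of_real)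
    then have "\<bar>c - 1\<bar> = 1" using norm_u norm_vu by simp
    ultimately show ?thesis by (auto simp: abs_if split: if_splits)
  qed
qed

(* Coordinates of an edge point with respect to p 1 - p 0 and p 2 - p 0. *)
definition edge_coords :: "nat \<Rightarrow> nat \<Rightarrow> real \<Rightarrow> real \<times> real" where
  "edge_coords i j t = (if i = 0 \<and> j = 1 then (t, 0) else if i = 0 then (0, t) else (1 - t, t))"

lemma edge_point_coords:
  assumes "i < j" "j < 3"
  shows "edge_point p i j t
    = p 0 + of_real (fst (edge_coords i j t)) * (p 1 - p 0) + of_real (snd (edge_coords i j t)) * (p 2 - p 0)"
  using edge_cases[OF assms] by (elim disjE) (simp_all add: edge_coords_def algebra_simps)

lemma edge_point_eq_cases:
  assumes "unit_equilateral p" "i < j" "j < 3" "i' < j'" "j' < 3"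
    and "edge_point p i j t = edge_point p i' j' t'"
  shows "(i = i' \<and> j = j' \<and> t = t') \<or> t = 0 \<or> t = 1"
proof -
  define \<alpha> \<beta> \<alpha>' \<beta>' where "\<alpha> = fst (edge_coords i j t)" and "\<beta> = snd (edge_coords i j t)"
    and "\<alpha>' = fst (edge_coords i' j' t')" and "\<beta>' = snd (edge_coords i' j' t')"
  have "p 0 + of_real \<alpha> * (p 1 - p 0) + of_real \<beta> * (p 2 - p 0)
      = p 0 + of_real \<alpha>' * (p 1 - p 0) + of_real \<beta>' * (p 2 - p 0)"
    using assms(6) unfolding edge_point_coords[OF assms(2,3)] edge_point_coords[OF assms(4,5)]
      \<alpha>_def \<beta>_def \<alpha>'_def \<beta>'_def .
  then have "of_real (\<alpha> - \<alpha>') * (p 1 - p 0) + of_real (\<beta> - \<beta>') * (p 2 - p 0) = 0"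
    by (simp only: add.assoc add_left_cancel of_real_diff left_diff_distrib add_diff_add[symmetric] diff_self)
  from unit_equilateral_independent[OF assms(1) this]
  have "edge_coords i j t = edge_coords i' j' t'" by (simp add: prod_eq_iff \<alpha>_def \<beta>_def \<alpha>'_def \<beta>'_def)
  then show ?thesis
    using edge_cases[OF assms(2,3)] edge_cases[OF assms(4,5)]
    by (elim disjE) (simp_all add: edge_coords_def)
qed

(* 2 f(p v) minus the values at the two other vertices: the normal derivative at p v for G_0. *)
definition normal_derivative :: "(nat \<Rightarrow> complex) \<Rightarrow> (complex \<Rightarrow> real) \<Rightarrow> nat \<Rightarrow> real" where
  "normal_derivative p f v = 3 * f (p v) - (f (p 0) + f (p 1) + f (p 2))"

lemma slopes_edge_data:
  assumes "i < j" "j < 3"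
  shows "slope_left (edge_data p f i j (3 - i - j)) = - normal_derivative p f i"
    "slope_right (edge_data p f i j (3 - i - j)) = - normal_derivative p f j"
  using edge_cases[OF assms]
  by (auto simp: slope_left_def slope_right_def edge_data_def normal_derivative_def)

lemma normal_derivative_sum:
  assumes "distinct [v, a, b]" "{v, a, b} = {0,1,2::nat}"
  shows "normal_derivative p f v + normal_derivative p f a + normal_derivative p f b = 0"
proof -
  have "f (p v) + f (p a) + f (p b) = (\<Sum>l\<in>{v, a, b}. f (p l))" using assms(1) by simp
  also have "\<dots> = f (p 0) + f (p 1) + f (p 2)" unfolding assms(2) by simp
  finally show ?thesis by (simp add: normal_derivative_def)
qed

lemma nonconst_edge_data:
  assumes "i < j" "j < 3" "\<not> (f (p 0) = f (p 1) \<and> f (p 1) = f (p 2))"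
  shows "nonconst (edge_data p f i j (3 - i - j))"
  using edge_cases[OF assms(1,2)] assms(3) by (auto simp: nonconst_def edge_data_def)

lemma flat_edge_point:
  assumes "i < j" "j < 3" "m \<le> 2^n" "flat_at n m (edge_data p f i j (3 - i - j))"
    and "\<not> (f (p 0) = f (p 1) \<and> f (p 1) = f (p 2))"
  shows "0 \<le> normal_derivative p f i * normal_derivative p f j"
    and "normal_derivative p f i = 0 \<Longrightarrow> edge_point p i j (real m / 2^n) = p i"
    and "normal_derivative p f j = 0 \<Longrightarrow> edge_point p i j (real m / 2^n) = p j"
proof -
  note signs = flat_at_signs[OF assms(4,3) nonconst_edge_data[OF assms(1,2,5)], unfolded slopes_edge_data[OF assms(1,2)]]
  show "0 \<le> normal_derivative p f i * normal_derivative p f j" using signs by simp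
  show "edge_point p i j (real m / 2^n) = p i" if "normal_derivative p f i = 0"
    using signs that by simp
  show "edge_point p i j (real m / 2^n) = p j" if "normal_derivative p f j = 0"
  proof -
    have "m = 2^n" using signs that assms(3) by simp
    then show ?thesis by simp
  qed
qed

lemma distinct_edges_common_vertex:
  assumes "i < j" "j < 3" "i' < j'" "j' < 3" "(i, j) \<noteq> (i', j')"
  obtains v a b where "distinct [v, a, b]" "{v, a, b} = {0,1,2::nat}" "{i, j} = {v, a}" "{i', j'} = {v, b}"
proof -
  consider "i = 0" "j = 1" "i' = 0" "j' = 2" | "i = 0" "j = 1" "i' = 1" "j' = 2"
    | "i = 0" "j = 2" "i' = 0" "j' = 1" | "i = 0" "j = 2" "i' = 1" "j' = 2"
    | "i = 1" "j = 2" "i' = 0" "j' = 1" | "i = 1" "j = 2" "i' = 0" "j' = 2"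
    using edge_cases[OF assms(1,2)] edge_cases[OF assms(3,4)] assms(5) by blast
  then show thesis
  proof cases
    case 1 show thesis by (rule that[of 0 1 2]) (auto simp: 1)
  next
    case 2 show thesis by (rule that[of 1 0 2]) (auto simp: 2)
  next
    case 3 show thesis by (rule that[of 0 2 1]) (auto simp: 3)
  next
    case 4 show thesis by (rule that[of 2 0 1]) (auto simp: 4)
  next
    case 5 show thesis by (rule that[of 1 2 0]) (auto simp: 5)
  next
    case 6 show thesis by (rule that[of 2 1 0]) (auto simp: 6)
  qed
qed

definition flat_points :: "(nat \<Rightarrow> complex) \<Rightarrow> (complex \<Rightarrow> real) \<Rightarrow> complex set" where
  "flat_points p f = {edge_point p i j (real m / 2^n) | i j n m.
     i < j \<and> j < 3 \<and> m \<le> 2^n \<and> flat_at n m (edge_data p f i j (3 - i - j))}"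

lemma sum_zero_sign:
  fixes a b c :: real
  assumes "a + b + c = 0" "0 \<le> a * b" "0 \<le> a * c"
  shows "a = 0"
proof -
  have "a = - b - c" using assms(1) by linarith
  then have "a * a = a * (- b - c)" by simp
  also have "\<dots> = - (a * b) - (a * c)" by (simp add: algebra_simps)
  finally have "a * a \<le> 0" using assms(2,3) by linarith
  then show ?thesis using zero_le_square[of a] by simp
qed

lemma flat_points_subsingleton:
  assumes "\<not> (f (p 0) = f (p 1) \<and> f (p 1) = f (p 2))" "x \<in> flat_points p f" "y \<in> flat_points p f"
  shows "x = y"
proof -
  obtain i j n m where x: "i < j" "j < 3" "m \<le> 2^n" "flat_at n m (edge_data p f i j (3 - i - j))"
    "x = edge_point p i j (real m / 2^n)"
    using assms(2) unfolding flat_points_def by blast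
  obtain i' j' n' m' where y: "i' < j'" "j' < 3" "m' \<le> 2^n'" "flat_at n' m' (edge_data p f i' j' (3 - i' - j'))"
    "y = edge_point p i' j' (real m' / 2^n')"
    using assms(3) unfolding flat_points_def by blast
  show ?thesis
  proof (cases "(i, j) = (i', j')")
    case True
    let ?d = "edge_data p f i j (3 - i - j)"
    have "flat_at (n + n') (m * 2^n') ?d" "flat_at (n + n') (m' * 2^n) ?d"
      using flat_at_refine[OF x(3), of n' ?d] flat_at_refine[OF y(3), of n ?d] x(4) y(4) True
      by (simp_all add: add.commute)
    moreover have "m * 2^n' \<le> 2^(n + n')" "m' * 2^n \<le> 2^(n + n')"
      using x(3) y(3) by (simp_all add: power_add)
    ultimately have "m * 2^n' = m' * 2^n"
      using flat_at_unique nonconst_edge_data[OF x(1,2) assms(1)] by blast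
    then have "real m * 2^n' = real m' * 2^n" by (metis of_nat_mult of_nat_numeral of_nat_power)
    then have "real m / 2^n = real m' / 2^n'" by (simp add: field_simps)
    then show ?thesis using x(5) y(5) True by simp
  next
    case False
    obtain v a b where vab: "distinct [v, a, b]" "{v, a, b} = {0,1,2::nat}" "{i, j} = {v, a}" "{i', j'} = {v, b}"
      using distinct_edges_common_vertex[OF x(1,2) y(1,2) False] .
    let ?N = "normal_derivative p f"
    have "0 \<le> ?N v * ?N a" "0 \<le> ?N v * ?N b"
      using flat_edge_point(1)[OF x(1-4) assms(1)] flat_edge_point(1)[OF y(1-4) assms(1)] vab(3,4)
      by (auto simp: doubleton_eq_iff mult.commute)
    with normal_derivative_sum[OF vab(1,2)] have "?N v = 0" by (rule sum_zero_sign)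
    then have "x = p v" "y = p v"
      using flat_edge_point(2,3)[OF x(1-4) assms(1)] flat_edge_point(2,3)[OF y(1-4) assms(1)] x(5) y(5) vab(3,4)
      by (auto simp: doubleton_eq_iff)
    then show ?thesis by simp
  qed
qed

lemma dyadic_0: "dyadic 0" and dyadic_1: "dyadic 1"
  unfolding dyadic_def by (rule exI[of _ 0], rule exI[of _ 0], simp) (rule exI[of _ 1], rule exI[of _ 0], simp)

lemma not_good_point_imp_flat:
  assumes "unit_equilateral p" "SG_harmonic p f" "x \<in> contour_junctions p" "\<not> good_point p f x"
  shows "x \<in> flat_points p f"
proof -
  obtain i j t where g: "i < j" "j < 3" "t \<in> {0..1}" "x = edge_point p i j t"
    "\<not> infinite_deriv (edge_restr p f i j) t"
    using assms(4) unfolding good_point_def by blast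
  obtain i' j' t' where c: "i' < j'" "j' < 3" "dyadic t'" "x = edge_point p i' j' t'"
    using assms(3) unfolding contour_junctions_def by blast
  have "edge_point p i j t = edge_point p i' j' t'" using g(4) c(4) by simp
  then have "t = t' \<or> t = 0 \<or> t = 1" using edge_point_eq_cases[OF assms(1) g(1,2) c(1,2)] by blast
  then have "dyadic t" using c(3) dyadic_0 dyadic_1 by blast
  then obtain n m where nm: "m \<le> 2^n" "t = real m / 2^n"
    using dyadic_in_grid[OF _ g(3)] unfolding dyadic_grid_def by blast
  have "{i, j, 3 - i - j} = {0,1,2::nat}" using third_vertex g(1,2) by simp
  moreover have "continuous_on {0..1} (edge_restr p f i j)"
    using continuous_on_edge_restr assms(2) g(1,2) by (simp add: SG_harmonic_iff)
  moreover have "SG_harmonic_eqs p f" using assms(2) by (simp add: SG_harmonic_iff)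
  ultimately have "flat_at n m (edge_data p f i j (3 - i - j))"
    using infinite_deriv_at_nonflat nm g(5) by blast
  then show ?thesis using g(1,2,4) nm unfolding flat_points_def by blast
qed

lemma vertex_values_nonconst:
  assumes "SG_harmonic p f" "\<exists>x\<in>SG p. \<exists>y\<in>SG p. f x \<noteq> f y"
  shows "\<not> (f (p 0) = f (p 1) \<and> f (p 1) = f (p 2))"
proof
  assume "f (p 0) = f (p 1) \<and> f (p 1) = f (p 2)"
  then have "f x = f (p 0)" if "x \<in> SG p" for x
    using SG_harmonic_const_on_SG[OF assms(1) _ _ that] by blast
  then show False using assms(2) by auto
qed

lemma has_real_derivative_imp_not_infinite_deriv:
  assumes "(g has_real_derivative D) (at t within {0..1})" "t \<in> {0..1::real}"
  shows "\<not> infinite_deriv g t"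
proof
  assume "infinite_deriv g t"
  then have "filterlim (\<lambda>s. (g s - g t) / (s - t)) at_infinity (at t within {0..1})"
    unfolding infinite_deriv_def
    using filterlim_at_top_imp_at_infinity filterlim_mono[OF _ at_bot_le_at_infinity order_refl] by blast
  moreover have "((\<lambda>s. (g s - g t) / (s - t)) \<longlongrightarrow> D) (at t within {0..1})"
    using assms(1) unfolding has_field_derivative_iff .
  moreover have "at t within {0..1} \<noteq> bot"
    using assms(2) by (simp add: trivial_limit_within)
  ultimately show False using not_tendsto_and_filterlim_at_infinity by blast
qed

lemma nongood_junction_unique:
  assumes "unit_equilateral p" "SG_harmonic p f" "\<exists>x\<in>SG p. \<exists>y\<in>SG p. f x \<noteq> f y"
    and "x \<in> contour_junctions p" "\<not> good_point p f x" "y \<in> contour_junctions p" "\<not> good_point p f y"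
  shows "x = y"
  using flat_points_subsingleton[OF vertex_values_nonconst[OF assms(2,3)]]
    not_good_point_imp_flat[OF assms(1,2)] assms(4-7) by blast

lemma not_good_pointI:
  "i < j \<Longrightarrow> j < 3 \<Longrightarrow> t \<in> {0..1} \<Longrightarrow> \<not> infinite_deriv (edge_restr p f i j) t
    \<Longrightarrow> \<not> good_point p f (edge_point p i j t)"
  unfolding good_point_def by blast

lemma edge_point_in_contour_junctions:
  "i < j \<Longrightarrow> j < 3 \<Longrightarrow> t \<in> {0..1} \<Longrightarrow> dyadic t \<Longrightarrow> edge_point p i j t \<in> contour_junctions p"
  unfolding contour_junctions_def by blast

lemma edge_point_inj:
  assumes "unit_equilateral p" "i < 3" "j < 3" "i \<noteq> j" "edge_point p i j s = edge_point p i j t"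
  shows "s = t"
proof -
  have "dist (p j) (p i) = 1" using assms(1-4) unfolding unit_equilateral_def by simp
  then show ?thesis using assms(5) by auto
qed

theorem lemma6:
  fixes p :: "nat \<Rightarrow> complex" and f :: "complex \<Rightarrow> real"
  assumes "unit_equilateral p"
    and "SG_harmonic p f"
    and "\<exists>x\<in>SG p. \<exists>y\<in>SG p. f x \<noteq> f y"
  shows "(\<forall>s t. s \<in> {0..1} \<and> dyadic s \<and> \<not> infinite_deriv (edge_restr p f 1 2) s \<longrightarrow>
               t \<in> {0..1} \<and> dyadic t \<and> \<not> infinite_deriv (edge_restr p f 1 2) t \<longrightarrow> s = t)
      \<and> (\<forall>x y. x \<in> contour_junctions p \<and> \<not> good_point p f x \<longrightarrow>
               y \<in> contour_junctions p \<and> \<not> good_point p f y \<longrightarrow> x = y)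
      \<and> (\<forall>x y. (x \<in> contour_junctions p \<and> (\<exists>i j t. i < j \<and> j < 3 \<and> t \<in> {0..1} \<and>
                   x = p i + of_real t * (p j - p i) \<and>
                   (edge_restr p f i j has_real_derivative 0) (at t within {0..1}))) \<longrightarrow>
               (y \<in> contour_junctions p \<and> (\<exists>i j t. i < j \<and> j < 3 \<and> t \<in> {0..1} \<and>
                   y = p i + of_real t * (p j - p i) \<and>
                   (edge_restr p f i j has_real_derivative 0) (at t within {0..1}))) \<longrightarrow> x = y)"
proof (intro conjI allI impI)
  note unique = nongood_junction_unique[OF assms]
  show "s = t" if "s \<in> {0..1} \<and> dyadic s \<and> \<not> infinite_deriv (edge_restr p f 1 2) s"
    and "t \<in> {0..1} \<and> dyadic t \<and> \<not> infinite_deriv (edge_restr p f 1 2) t" for s t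
  proof -
    have "edge_point p 1 2 s = edge_point p 1 2 t"
      using that by (intro unique edge_point_in_contour_junctions not_good_pointI) auto
    then show "s = t" by (rule edge_point_inj[OF assms(1), rotated -1]) simp_all
  qed
  show "x = y" if "x \<in> contour_junctions p \<and> \<not> good_point p f x"
    and "y \<in> contour_junctions p \<and> \<not> good_point p f y" for x y
    using unique that by blast
  show "x = y" if "x \<in> contour_junctions p \<and> (\<exists>i j t. i < j \<and> j < 3 \<and> t \<in> {0..1} \<and>
        x = p i + of_real t * (p j - p i) \<and> (edge_restr p f i j has_real_derivative 0) (at t within {0..1}))"
    and "y \<in> contour_junctions p \<and> (\<exists>i j t. i < j \<and> j < 3 \<and> t \<in> {0..1} \<and>
        y = p i + of_real t * (p j - p i) \<and> (edge_restr p f i j has_real_derivative 0) (at t within {0..1}))"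
    for x y
    using that unique not_good_pointI has_real_derivative_imp_not_infinite_deriv by metis
qed

end
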